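(* Let $z\in(-1,1)$ be real and suppose that $f^{(1)}(L_z)$ and $g^{(1)}(L_z)$ are disjoint. Then there is an open neighbourhood $U$ of $z$ in $\mathbb{C}$ such that $\mathcal{M}\cap U\subseteq\mathbb{R}$.
   Context: For real $z\in(-1,1)$ define affine maps of $\mathbb{R}^2$ by $f^{(1)}(x,y)=(zx,\,x+zy)$ and $g^{(1)}(x,y)=(z(x-1)+1,\,x-1+zy)$, and let $L_z\subseteq\mathbb{R}^2$ be the limit set of the iterated function system $\{f^{(1)},g^{(1)}\}$ (the unique nonempty compact set with $L_z=f^{(1)}(L_z)\cup g^{(1)}(L_z)$). For $w\in\mathbb{D}^*=\{0<|w|<1\}$, let $\Lambda_w$ be the unique nonempty compact subset of $\mathbb{C}$ with $\Lambda_w=\{wx:x\in\Lambda_w\}\cup\{w(x-1)+1:x\in\Lambda_w\}$, and $\mathcal{M}=\{w\in\mathbb{D}^*:\Lambda_w\text{ connected}\}$. *)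

theory Defs
  imports "HOL-Analysis.Analysis"
begin

definition f1 :: "real \<Rightarrow> real \<times> real \<Rightarrow> real \<times> real" where
  "f1 z p = (z * fst p, fst p + z * snd p)"

definition g1 :: "real \<Rightarrow> real \<times> real \<Rightarrow> real \<times> real" where
  "g1 z p = (z * (fst p - 1) + 1, fst p - 1 + z * snd p)"

definition L :: "real \<Rightarrow> (real \<times> real) set" where
  "L z = (THE K. K \<noteq> {} \<and> compact K \<and> K = f1 z ` K \<union> g1 z ` K)"

definition Lambda :: "complex \<Rightarrow> complex set" where
  "Lambda w = (THE K. K \<noteq> {} \<and> compact K \<and>
      K = (\<lambda>x. w * x) ` K \<union> (\<lambda>x. w * (x - 1) + 1) ` K)"

definition Mset :: "complex set" where
  "Mset = {w. 0 < cmod w \<and> cmod w < 1 \<and> connected (Lambda w)}"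

end

theory Submission
  imports Defs
begin

text \<open>
  Both limit sets are images of coding maps on 0-1 sequences:
  \<open>\<Lambda>\<^sub>w = {(1 - w) \<Sum> a\<^sub>n w\<^sup>n}\<close>, and \<open>L\<^sub>z\<close> consists of the points \<open>(P(z), P'(z))\<close> with
  \<open>P(z) = (1 - z) \<Sum> a\<^sub>n z\<^sup>n\<close>.
  If \<open>w \<in> \<M>\<close>, connectedness makes the two first-level pieces of \<open>\<Lambda>\<^sub>w\<close> meet, so a power series
  \<open>S(x) = \<Sum> d\<^sub>n x\<^sup>n\<close> with digits \<open>d\<^sub>n \<in> {-1, 0, 1}\<close> vanishes at \<open>w\<close>. For non-real \<open>w\<close> it also
  vanishes at \<open>w\<close>'s conjugate, hence so does the divided difference \<open>Q(w, cnj w)\<close>; bounds uniform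
  in the digits then make both \<open>S(z)\<close> and \<open>S'(z) = Q(z, z)\<close> of order \<open>|w - z|\<close>. But
  \<open>((1 - z) S(z), ((1 - z) S)'(z))\<close> is the difference of a point of \<open>f(L\<^sub>z)\<close> and a point of
  \<open>g(L\<^sub>z)\<close>, which are disjoint compact sets and so at positive distance.
\<close>

lemma summable_of_nat_mult_power_pred:
  fixes x :: real
  assumes "\<bar>x\<bar> < 1"
  shows "summable (\<lambda>n. real n * x ^ (n - 1))"
proof -
  have "summable (\<lambda>n. diffs (\<lambda>_. 1::real) n * x ^ n)"
    by (rule termdiff_converges[where K=1]) (use assms in \<open>auto intro: summable_geometric\<close>)
  from sums_summable[OF diffs_equiv[OF this]] show ?thesis
    by simp
qed

lemma summable_of_nat_mult_pred_power:
  fixes x :: real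
  assumes "\<bar>x\<bar> < 1"
  shows "summable (\<lambda>n. real n * real (n - 1) * x ^ (n - 2))"
proof -
  have "summable (\<lambda>n. real (Suc n) * y ^ n)" if "\<bar>y\<bar> < 1" for y :: real
    using summable_of_nat_mult_power_pred[OF that] summable_Suc_iff[of "\<lambda>n. real n * y ^ (n - 1)"]
    by simp
  then have "summable (\<lambda>n. diffs (\<lambda>n. real (Suc n)) n * x ^ n)"
    by (intro termdiff_converges[where K=1]) (use assms in auto)
  then have "summable (\<lambda>n. real (Suc (Suc n)) * real (Suc n) * x ^ n)"
    by (simp add: diffs_def mult_ac)
  then show ?thesis
    using summable_Suc_iff[of "\<lambda>n. real n * real (n - 1) * x ^ (n - 2)"]
      summable_Suc_iff[of "\<lambda>n. real (Suc n) * real n * x ^ (n - 1)"]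
    by simp
qed

locale affine_ifs_coding =
  fixes F :: "bool \<Rightarrow> 'a::euclidean_space \<Rightarrow> 'a" and A :: "'a \<Rightarrow> 'a" and \<beta> :: "bool \<Rightarrow> 'a"
    and c :: "nat \<Rightarrow> real" and \<pi> :: "(nat \<Rightarrow> bool) \<Rightarrow> 'a" and M :: real
  assumes maps_eq: "F b x = A x + \<beta> b"
    and linear_part: "linear A"
    and norm_iterate_le: "norm ((A ^^ n) v) \<le> c n * norm v"
    and iterate_bound_tendsto_zero: "c \<longlonglongrightarrow> 0"
    and norm_coding_le: "norm (\<pi> a) \<le> M"
    and coding_rec: "\<pi> a = F (a 0) (\<pi> (\<lambda>n. a (Suc n)))"
begin

primrec maps_comp :: "nat \<Rightarrow> (nat \<Rightarrow> bool) \<Rightarrow> 'a \<Rightarrow> 'a" where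
  "maps_comp 0 a x = x"
| "maps_comp (Suc n) a x = F (a 0) (maps_comp n (\<lambda>k. a (Suc k)) x)"

lemma maps_comp_diff: "maps_comp n a x - maps_comp n a y = (A ^^ n) (x - y)"
proof (induction n arbitrary: a)
  case (Suc n)
  have "maps_comp (Suc n) a x - maps_comp (Suc n) a y
      = A (maps_comp n (\<lambda>k. a (Suc k)) x - maps_comp n (\<lambda>k. a (Suc k)) y)"
    by (simp add: maps_eq linear_diff[OF linear_part])
  then show ?case
    using Suc.IH by simp
qed simp

lemma iterate_bound_nonneg: "0 \<le> c n"
proof -
  obtain v :: 'a where "norm v = 1"
    using vector_choose_size[of 1] by auto
  then show ?thesis
    using order_trans[OF norm_ge_zero norm_iterate_le[of n v]] by simp
qed

lemma coding_eq_maps_comp: "\<pi> a = maps_comp n a (\<pi> (\<lambda>k. a (k + n)))"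
proof (induction n arbitrary: a)
  case (Suc n)
  from Suc.IH[of "\<lambda>k. a (Suc k)"] show ?case
    using coding_rec[of a] by simp
qed simp

lemma norm_maps_comp_minus_coding_le:
  "norm (maps_comp n a x - \<pi> a) \<le> c n * (norm x + M)"
proof -
  have "norm (maps_comp n a x - \<pi> a)
      = norm (maps_comp n a x - maps_comp n a (\<pi> (\<lambda>k. a (k + n))))"
    by (simp flip: coding_eq_maps_comp)
  also have "\<dots> = norm ((A ^^ n) (x - \<pi> (\<lambda>k. a (k + n))))"
    by (simp only: maps_comp_diff)
  also have "\<dots> \<le> c n * norm (x - \<pi> (\<lambda>k. a (k + n)))"
    by (rule norm_iterate_le)
  also have "\<dots> \<le> c n * (norm x + M)"
    using iterate_bound_nonneg[of n] norm_coding_le[of "\<lambda>k. a (k + n)"]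
    by (intro mult_left_mono) (auto intro: order_trans[OF norm_triangle_ineq4])
  finally show ?thesis .
qed

lemma continuous_on_map: "continuous_on S (F b)"
  unfolding maps_eq[abs_def]
  by (intro continuous_intros linear_continuous_on linear_part[unfolded linear_conv_bounded_linear])

lemma map_coding: "F b (\<pi> a) = \<pi> (case_nat b a)"
  using coding_rec[of "case_nat b a"] by simp

lemma range_coding_eq_images: "range \<pi> = F False ` range \<pi> \<union> F True ` range \<pi>"
proof
  show "range \<pi> \<subseteq> F False ` range \<pi> \<union> F True ` range \<pi>"
  proof
    fix x assume "x \<in> range \<pi>"
    then obtain a where "x = F (a 0) (\<pi> (\<lambda>n. a (Suc n)))"
      by (auto simp flip: coding_rec)
    then show "x \<in> F False ` range \<pi> \<union> F True ` range \<pi>"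
      by (cases "a 0") auto
  qed
  show "F False ` range \<pi> \<union> F True ` range \<pi> \<subseteq> range \<pi>"
    using map_coding by auto
qed

lemma range_coding_subset_invariant:
  assumes "K \<noteq> {}" "closed K" "F False ` K \<subseteq> K" "F True ` K \<subseteq> K"
  shows "range \<pi> \<subseteq> K"
proof
  fix x assume "x \<in> range \<pi>"
  then obtain a where xa: "x = \<pi> a" by auto
  obtain x0 where x0: "x0 \<in> K" using assms(1) by auto
  have maps_comp_in: "maps_comp n a' y \<in> K" if "y \<in> K" for n a' y
    using that
  proof (induction n arbitrary: a')
    case (Suc n)
    then have "maps_comp n (\<lambda>k. a' (Suc k)) y \<in> K" by blast
    then show ?case using assms(3,4) by (cases "a' 0") auto
  qed simp
  have "(\<lambda>n. maps_comp n a x0 - \<pi> a) \<longlonglongrightarrow> 0"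
  proof (rule Lim_null_comparison)
    show "\<forall>\<^sub>F n in sequentially. norm (maps_comp n a x0 - \<pi> a) \<le> c n * (norm x0 + M)"
      by (intro always_eventually allI norm_maps_comp_minus_coding_le)
    show "(\<lambda>n. c n * (norm x0 + M)) \<longlonglongrightarrow> 0"
      using tendsto_mult_left_zero[OF iterate_bound_tendsto_zero] by simp
  qed
  then have "(\<lambda>n. maps_comp n a x0) \<longlonglongrightarrow> \<pi> a"
    by (simp add: LIM_zero_iff)
  then show "x \<in> K"
    unfolding xa by (rule closed_sequentially[OF assms(2) maps_comp_in[OF x0]])
qed

lemma covered_compact_subset_range_coding:
  assumes "compact K" "K \<subseteq> F False ` K \<union> F True ` K"
  shows "K \<subseteq> range \<pi>"
proof
  fix x assume xK: "x \<in> K"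
  obtain B where B: "\<And>y. y \<in> K \<Longrightarrow> norm y \<le> B"
    using compact_imp_bounded[OF assms(1)] unfolding bounded_iff by blast
  have "\<exists>b y'. y' \<in> K \<and> y = F b y'" if "y \<in> K" for y
    using assms(2) that by blast
  then obtain bit pre where pre: "\<And>y. y \<in> K \<Longrightarrow> pre y \<in> K \<and> y = F (bit y) (pre y)"
    by metis
  define ys where "ys n = (pre ^^ n) x" for n
  define a where "a n = bit (ys n)" for n
  have ys_in: "ys n \<in> K" for n
    by (induction n) (use xK pre in \<open>auto simp: ys_def\<close>)
  have ys_step: "ys m = F (a m) (ys (Suc m))" for m
    unfolding a_def ys_def funpow.simps o_apply by (rule conjunct2[OF pre[OF ys_in[unfolded ys_def]]])
  have ys_eq: "ys m = maps_comp n (\<lambda>k. a (k + m)) (ys (m + n))" for n m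
  proof (induction n arbitrary: m)
    case (Suc n)
    from Suc.IH[of "Suc m"] show ?case
      using ys_step[of m] by simp
  qed simp
  have "norm (x - \<pi> a) \<le> c n * (B + M)" for n
  proof -
    have "norm (x - \<pi> a) = norm (maps_comp n a (ys n) - \<pi> a)"
      using ys_eq[of 0 n] by (simp add: ys_def)
    also have "\<dots> \<le> c n * (norm (ys n) + M)"
      by (rule norm_maps_comp_minus_coding_le)
    also have "\<dots> \<le> c n * (B + M)"
      using B[OF ys_in] iterate_bound_nonneg by (simp add: mult_left_mono)
    finally show ?thesis .
  qed
  moreover have "(\<lambda>n. c n * (B + M)) \<longlonglongrightarrow> 0"
    using tendsto_mult_left_zero[OF iterate_bound_tendsto_zero] by simp
  ultimately have "norm (x - \<pi> a) \<le> 0"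
    by (intro LIMSEQ_le[OF tendsto_const]) auto
  then show "x \<in> range \<pi>" by simp
qed

lemma attractor_eq_range_coding:
  assumes "K \<noteq> {}" "compact K" "K = F False ` K \<union> F True ` K"
  shows "K = range \<pi>"
proof
  show "K \<subseteq> range \<pi>"
    using covered_compact_subset_range_coding assms(2,3) by blast
  show "range \<pi> \<subseteq> K"
    using range_coding_subset_invariant[of K] assms compact_imp_closed by blast
qed

lemma closure_image_map:
  assumes "bounded S"
  shows "closure (F b ` S) = F b ` closure S"
proof
  have "compact (F b ` closure S)"
    using assms by (intro compact_continuous_image continuous_on_map) (simp add: compact_closure)
  then show "closure (F b ` S) \<subseteq> F b ` closure S"
    by (intro closure_minimal closure_subset[THEN image_mono] compact_imp_closed)
  show "F b ` closure S \<subseteq> closure (F b ` S)"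
    by (rule image_closure_subset[OF continuous_on_map closed_closure closure_subset])
qed

lemma range_coding_is_attractor:
  "range \<pi> \<noteq> {} \<and> compact (range \<pi>) \<and> range \<pi> = F False ` range \<pi> \<union> F True ` range \<pi>"
proof -
  have bounded: "bounded (range \<pi>)"
    unfolding bounded_iff using norm_coding_le by blast
  have "closure (range \<pi>) \<noteq> {}"
    by simp
  moreover have "compact (closure (range \<pi>))"
    using bounded by (simp add: compact_closure)
  moreover have "closure (range \<pi>) = F False ` closure (range \<pi>) \<union> F True ` closure (range \<pi>)"
    by (subst range_coding_eq_images) (simp add: closure_Un closure_image_map[OF bounded])
  ultimately have "closure (range \<pi>) = range \<pi>"
    by (rule attractor_eq_range_coding)
  then have "compact (range \<pi>)"
    using bounded compact_closure[of "range \<pi>"] by simp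
  then show ?thesis
    using range_coding_eq_images by blast
qed

lemma The_attractor_eq_range_coding:
  "(THE K. K \<noteq> {} \<and> compact K \<and> K = F False ` K \<union> F True ` K) = range \<pi>"
proof (rule the_equality)
  fix K
  assume "K \<noteq> {} \<and> compact K \<and> K = F False ` K \<union> F True ` K"
  then show "K = range \<pi>"
    by (elim conjE) (rule attractor_eq_range_coding)
qed (rule range_coding_is_attractor)

end

definition Lambda_coding :: "complex \<Rightarrow> (nat \<Rightarrow> bool) \<Rightarrow> complex" where
  "Lambda_coding w a = (\<Sum>n. (1 - w) * w ^ n * of_bool (a n))"

lemma norm_Lambda_coding_term_le: "norm ((1 - w) * w ^ n * of_bool (a n)) \<le> cmod (1 - w) * cmod w ^ n"
  by (simp add: norm_mult norm_power)

lemma summable_Lambda_coding: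
  assumes "cmod w < 1"
  shows "summable (\<lambda>n. (1 - w) * w ^ n * of_bool (a n))"
  using assms
  by (intro summable_comparison_test'[OF _ norm_Lambda_coding_term_le] summable_mult summable_geometric) auto

lemma norm_Lambda_coding_le:
  assumes "cmod w < 1"
  shows "cmod (Lambda_coding w a) \<le> cmod (1 - w) / (1 - cmod w)"
proof -
  have "cmod (Lambda_coding w a) \<le> (\<Sum>n. cmod (1 - w) * cmod w ^ n)"
    unfolding Lambda_coding_def using assms
    by (intro norm_suminf_le norm_Lambda_coding_term_le summable_mult summable_geometric) auto
  also have "\<dots> = cmod (1 - w) / (1 - cmod w)"
    using assms by (simp add: suminf_mult suminf_geometric divide_simps)
  finally show ?thesis .
qed

lemma Lambda_coding_rec:
  assumes "cmod w < 1"
  shows "Lambda_coding w a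
    = (if a 0 then (\<lambda>x. w * (x - 1) + 1) else (\<lambda>x. w * x)) (Lambda_coding w (\<lambda>n. a (Suc n)))"
proof -
  define t where "t n = (1 - w) * w ^ n * of_bool (a n)" for n
  have "Lambda_coding w a = (\<Sum>n. t (Suc n)) + t 0"
    unfolding Lambda_coding_def t_def[symmetric]
    using suminf_split_head[OF summable_Lambda_coding[OF assms, of a, folded t_def]] by simp
  also have "(\<Sum>n. t (Suc n)) = w * Lambda_coding w (\<lambda>n. a (Suc n))"
    unfolding Lambda_coding_def t_def
    using suminf_mult[OF summable_Lambda_coding[OF assms, of "\<lambda>n. a (Suc n)"], of w]
    by (simp add: mult_ac)
  finally show ?thesis
    by (cases "a 0") (simp_all add: t_def algebra_simps)
qed

lemma affine_ifs_coding_Lambda: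
  assumes "cmod w < 1"
  shows "affine_ifs_coding (\<lambda>b. if b then (\<lambda>x. w * (x - 1) + 1) else (\<lambda>x. w * x)) ((*) w)
    (\<lambda>b. if b then 1 - w else 0) (\<lambda>n. cmod w ^ n) (Lambda_coding w) (cmod (1 - w) / (1 - cmod w))"
proof unfold_locales
  have "(((*) w) ^^ n) v = w ^ n * v" for n v
    by (induction n) auto
  then show "norm ((((*) w) ^^ n) v) \<le> cmod w ^ n * norm v" for n v
    by (simp add: norm_mult norm_power)
  show "Lambda_coding w a = (if a 0 then (\<lambda>x. w * (x - 1) + 1) else (*) w) (Lambda_coding w (\<lambda>n. a (Suc n)))"
    for a by (rule Lambda_coding_rec[OF assms])
qed (use assms in \<open>auto simp: algebra_simps scaleR_conv_of_real
      intro: LIMSEQ_power_zero norm_Lambda_coding_le\<close>)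

definition L_coding :: "real \<Rightarrow> (nat \<Rightarrow> bool) \<Rightarrow> real \<times> real" where
  "L_coding z a = ((\<Sum>n. (1 - z) * z ^ n * of_bool (a n)),
                   (\<Sum>n. ((1 - z) * (real n * z ^ (n - 1)) - z ^ n) * of_bool (a n)))"

context
  fixes z :: real
  assumes z: "\<bar>z\<bar> < 1"
begin

lemma L_coding_fst_term_le: "\<bar>(1 - z) * z ^ n * of_bool (a n)\<bar> \<le> \<bar>1 - z\<bar> * \<bar>z\<bar> ^ n"
  by (simp add: abs_mult power_abs)

lemma L_coding_snd_term_le:
  "\<bar>((1 - z) * (real n * z ^ (n - 1)) - z ^ n) * of_bool (a n)\<bar>
     \<le> \<bar>1 - z\<bar> * (real n * \<bar>z\<bar> ^ (n - 1)) + \<bar>z\<bar> ^ n"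
proof -
  have "\<bar>(1 - z) * (real n * z ^ (n - 1)) - z ^ n\<bar> \<le> \<bar>1 - z\<bar> * (real n * \<bar>z\<bar> ^ (n - 1)) + \<bar>z\<bar> ^ n"
    by (rule order_trans[OF abs_triangle_ineq4]) (simp add: abs_mult power_abs)
  then show ?thesis
    by (simp add: abs_mult)
qed

lemma summable_L_coding_fst_bound: "summable (\<lambda>n. \<bar>1 - z\<bar> * \<bar>z\<bar> ^ n)"
  using z by (intro summable_mult summable_geometric) auto

lemma summable_L_coding_snd_bound:
  "summable (\<lambda>n. \<bar>1 - z\<bar> * (real n * \<bar>z\<bar> ^ (n - 1)) + \<bar>z\<bar> ^ n)"
  using z by (intro summable_add summable_mult summable_of_nat_mult_power_pred summable_geometric) auto

lemma summable_L_coding_fst: "summable (\<lambda>n. (1 - z) * z ^ n * of_bool (a n))"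
  by (rule summable_comparison_test'[OF summable_L_coding_fst_bound])
    (simp only: real_norm_def L_coding_fst_term_le)

lemma summable_L_coding_snd: "summable (\<lambda>n. ((1 - z) * (real n * z ^ (n - 1)) - z ^ n) * of_bool (a n))"
  by (rule summable_comparison_test'[OF summable_L_coding_snd_bound])
    (simp only: real_norm_def L_coding_snd_term_le)

lemma norm_L_coding_le:
  "norm (L_coding z a) \<le> (\<Sum>n. \<bar>1 - z\<bar> * \<bar>z\<bar> ^ n)
     + (\<Sum>n. \<bar>1 - z\<bar> * (real n * \<bar>z\<bar> ^ (n - 1)) + \<bar>z\<bar> ^ n)"
proof -
  have "norm (\<Sum>n. (1 - z) * z ^ n * of_bool (a n)) \<le> (\<Sum>n. \<bar>1 - z\<bar> * \<bar>z\<bar> ^ n)"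
    by (rule norm_suminf_le) (use L_coding_fst_term_le summable_L_coding_fst_bound in auto)
  moreover have "norm (\<Sum>n. ((1 - z) * (real n * z ^ (n - 1)) - z ^ n) * of_bool (a n))
      \<le> (\<Sum>n. \<bar>1 - z\<bar> * (real n * \<bar>z\<bar> ^ (n - 1)) + \<bar>z\<bar> ^ n)"
    by (rule norm_suminf_le) (use L_coding_snd_term_le summable_L_coding_snd_bound in auto)
  ultimately show ?thesis
    unfolding L_coding_def by (rule order_trans[OF norm_Pair_le add_mono])
qed

lemma L_coding_rec: "L_coding z a = (if a 0 then g1 z else f1 z) (L_coding z (\<lambda>n. a (Suc n)))"
proof -
  define s where "s n = (1 - z) * z ^ n * of_bool (a n)" for n
  define t where "t n = ((1 - z) * (real n * z ^ (n - 1)) - z ^ n) * of_bool (a n)" for n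
  let ?x = "fst (L_coding z (\<lambda>n. a (Suc n)))" and ?y = "snd (L_coding z (\<lambda>n. a (Suc n)))"
  have "suminf s = (\<Sum>n. s (Suc n)) + s 0"
    using suminf_split_head[OF summable_L_coding_fst[of a, folded s_def]] by simp
  also have "(\<Sum>n. s (Suc n)) = z * ?x"
    unfolding s_def L_coding_def fst_conv
    using suminf_mult[OF summable_L_coding_fst[of "\<lambda>n. a (Suc n)"], of z] by (simp add: mult_ac)
  finally have fst_eq: "suminf s = z * ?x + s 0" .
  have "t (Suc n) = z * (((1 - z) * (real n * z ^ (n - 1)) - z ^ n) * of_bool (a (Suc n)))
      + (1 - z) * z ^ n * of_bool (a (Suc n))" for n
    by (cases n) (simp_all add: t_def algebra_simps)
  then have "(\<Sum>n. t (Suc n)) = z * ?y + ?x"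
    unfolding L_coding_def fst_conv snd_conv
    using suminf_add[OF summable_mult[OF summable_L_coding_snd, of z] summable_L_coding_fst]
      suminf_mult[OF summable_L_coding_snd, of z]
    by simp
  moreover have "suminf t = (\<Sum>n. t (Suc n)) + t 0"
    using suminf_split_head[OF summable_L_coding_snd[of a, folded t_def]] by simp
  ultimately have snd_eq: "suminf t = z * ?y + ?x + t 0"
    by simp
  have "L_coding z a = (suminf s, suminf t)"
    unfolding L_coding_def s_def[abs_def] t_def[abs_def] ..
  moreover have "s 0 = of_bool (a 0) * (1 - z)" "t 0 = - of_bool (a 0)"
    by (simp_all add: s_def t_def)
  ultimately show ?thesis
    using fst_eq snd_eq by (cases "a 0") (simp_all add: f1_def g1_def algebra_simps)
qed

lemma iterate_f1: "(f1 z ^^ n) p = (z ^ n * fst p, real n * z ^ (n - 1) * fst p + z ^ n * snd p)"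
proof (induction n)
  case (Suc n)
  then show ?case
    by (cases n) (simp_all add: f1_def algebra_simps)
qed simp

lemma norm_iterate_f1_le:
  "norm ((f1 z ^^ n) p) \<le> (2 * \<bar>z\<bar> ^ n + real n * \<bar>z\<bar> ^ (n - 1)) * norm p"
proof -
  have coords: "\<bar>fst p\<bar> \<le> norm p" "\<bar>snd p\<bar> \<le> norm p"
    using norm_fst_le[of "fst p" "snd p"] norm_snd_le[of "snd p" "fst p"] by auto
  have "norm ((f1 z ^^ n) p)
      \<le> \<bar>z ^ n * fst p\<bar> + \<bar>real n * z ^ (n - 1) * fst p + z ^ n * snd p\<bar>"
    unfolding iterate_f1 using norm_Pair_le by (metis real_norm_def)
  also have "\<dots> \<le> \<bar>z\<bar> ^ n * \<bar>fst p\<bar> + (real n * \<bar>z\<bar> ^ (n - 1) * \<bar>fst p\<bar> + \<bar>z\<bar> ^ n * \<bar>snd p\<bar>)"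
    by (intro add_mono order_refl order_trans[OF abs_triangle_ineq]) (auto simp: abs_mult power_abs)
  also have "\<dots> \<le> \<bar>z\<bar> ^ n * norm p + (real n * \<bar>z\<bar> ^ (n - 1) * norm p + \<bar>z\<bar> ^ n * norm p)"
    using coords by (intro add_mono mult_left_mono) auto
  finally show ?thesis
    by (simp add: algebra_simps)
qed

lemma affine_ifs_coding_L:
  "affine_ifs_coding (\<lambda>b. if b then g1 z else f1 z) (f1 z) (\<lambda>b. if b then (1 - z, -1) else 0)
    (\<lambda>n. 2 * \<bar>z\<bar> ^ n + real n * \<bar>z\<bar> ^ (n - 1)) (L_coding z)
    ((\<Sum>n. \<bar>1 - z\<bar> * \<bar>z\<bar> ^ n) + (\<Sum>n. \<bar>1 - z\<bar> * (real n * \<bar>z\<bar> ^ (n - 1)) + \<bar>z\<bar> ^ n))"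
proof unfold_locales
  have powers: "(\<lambda>n. \<bar>z\<bar> ^ n) \<longlonglongrightarrow> 0"
    using z by (intro LIMSEQ_power_zero) auto
  have scaled_powers: "(\<lambda>n. real n * \<bar>z\<bar> ^ (n - 1)) \<longlonglongrightarrow> 0"
    by (rule summable_LIMSEQ_zero[OF summable_of_nat_mult_power_pred]) (use z in simp)
  from tendsto_add[OF tendsto_mult_right_zero[OF powers] scaled_powers, of 2]
  show "(\<lambda>n. 2 * \<bar>z\<bar> ^ n + real n * \<bar>z\<bar> ^ (n - 1)) \<longlonglongrightarrow> 0"
    by (simp add: mult.commute)
  show "L_coding z a = (if a 0 then g1 z else f1 z) (L_coding z (\<lambda>n. a (Suc n)))" for a
    by (rule L_coding_rec)
  show "norm ((f1 z ^^ n) p) \<le> (2 * \<bar>z\<bar> ^ n + real n * \<bar>z\<bar> ^ (n - 1)) * norm p" for n p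
    by (rule norm_iterate_f1_le)
  show "norm (L_coding z a) \<le> (\<Sum>n. \<bar>1 - z\<bar> * \<bar>z\<bar> ^ n)
     + (\<Sum>n. \<bar>1 - z\<bar> * (real n * \<bar>z\<bar> ^ (n - 1)) + \<bar>z\<bar> ^ n)" for a
    by (rule norm_L_coding_le)
qed (auto simp: f1_def g1_def algebra_simps)

end

lemma Lambda_eq_range_coding:
  assumes "cmod w < 1"
  shows "Lambda w = range (Lambda_coding w)"
proof -
  interpret affine_ifs_coding "\<lambda>b. if b then (\<lambda>x. w * (x - 1) + 1) else (\<lambda>x. w * x)" "(*) w"
    "\<lambda>b. if b then 1 - w else 0" "\<lambda>n. cmod w ^ n" "Lambda_coding w" "cmod (1 - w) / (1 - cmod w)"
    by (rule affine_ifs_coding_Lambda[OF assms])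
  show ?thesis
    using The_attractor_eq_range_coding by (simp add: Lambda_def)
qed

lemma L_eq_range_coding:
  assumes "\<bar>z\<bar> < 1"
  shows "L z = range (L_coding z)"
proof -
  interpret affine_ifs_coding "\<lambda>b. if b then g1 z else f1 z" "f1 z" "\<lambda>b. if b then (1 - z, -1) else 0"
    "\<lambda>n. 2 * \<bar>z\<bar> ^ n + real n * \<bar>z\<bar> ^ (n - 1)" "L_coding z"
    "(\<Sum>n. \<bar>1 - z\<bar> * \<bar>z\<bar> ^ n) + (\<Sum>n. \<bar>1 - z\<bar> * (real n * \<bar>z\<bar> ^ (n - 1)) + \<bar>z\<bar> ^ n)"
    by (rule affine_ifs_coding_L[OF assms])
  show ?thesis
    using The_attractor_eq_range_coding by (simp add: L_def)
qed

definition power_diff_quot :: "nat \<Rightarrow> 'a::comm_ring_1 \<Rightarrow> 'a \<Rightarrow> 'a" where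
  "power_diff_quot n x y = (\<Sum>i<n. y ^ (n - Suc i) * x ^ i)"

lemma power_diff_eq_mult_quot: "x ^ n - y ^ n = (x - y) * power_diff_quot n x y"
  unfolding power_diff_quot_def by (rule power_diff_sumr2)

lemma power_diff_quot_same: "power_diff_quot n x x = of_nat n * x ^ (n - 1)"
proof -
  have "power_diff_quot n x x = (\<Sum>i<n. x ^ (n - 1))"
    unfolding power_diff_quot_def by (intro sum.cong refl) (simp add: power_add[symmetric])
  then show ?thesis
    by simp
qed

context
  fixes x y :: "'a::real_normed_field" and R :: real
  assumes x: "norm x \<le> R" and y: "norm y \<le> R"
begin

lemma norm_power_diff_quot_le: "norm (power_diff_quot n x y) \<le> real n * R ^ (n - 1)"
proof -
  have "norm (power_diff_quot n x y) \<le> (\<Sum>i<n. norm (y ^ (n - Suc i) * x ^ i))"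
    unfolding power_diff_quot_def by (rule norm_sum)
  also have "\<dots> \<le> (\<Sum>i<n. R ^ (n - 1))"
  proof (rule sum_mono)
    fix i assume "i \<in> {..<n}"
    then have "R ^ (n - Suc i) * R ^ i = R ^ (n - 1)"
      by (simp add: power_add[symmetric])
    moreover have "norm (y ^ (n - Suc i) * x ^ i) \<le> R ^ (n - Suc i) * R ^ i"
      unfolding norm_mult norm_power using x y order_trans[OF norm_ge_zero x]
      by (intro mult_mono power_mono) auto
    ultimately show "norm (y ^ (n - Suc i) * x ^ i) \<le> R ^ (n - 1)"
      by simp
  qed
  finally show ?thesis
    by simp
qed

lemma norm_power_diff_le: "norm (x ^ n - y ^ n) \<le> real n * R ^ (n - 1) * norm (x - y)"
  unfolding power_diff_eq_mult_quot norm_mult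
  using norm_power_diff_quot_le by (simp add: mult_left_mono mult.commute)

end

lemma norm_power_diff_quot_diff_le:
  fixes x y z :: "'a::real_normed_field"
  assumes x: "norm x \<le> R" and y: "norm y \<le> R" and z: "norm z \<le> R"
  shows "norm (power_diff_quot n x y - power_diff_quot n z z)
    \<le> real n * real (n - 1) * R ^ (n - 2) * (norm (x - z) + norm (y - z))"
proof -
  have R: "0 \<le> R"
    using x norm_ge_zero order_trans by blast
  let ?e = "norm (x - z) + norm (y - z)"
  have exponents: "real j * R ^ (j - 1) * R ^ i \<le> real (n - 1) * R ^ (n - 2)" if "i + j = n - 1" for i j
  proof (cases j)
    case (Suc j')
    then have "j - 1 + i = n - 2"
      using that by simp
    then have "R ^ (j - 1) * R ^ i = R ^ (n - 2)"
      by (metis power_add)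
    then show ?thesis
      using that R by (simp add: mult.assoc mult_right_mono)
  qed (use R in simp)
  have "norm (power_diff_quot n x y - power_diff_quot n z z)
      \<le> (\<Sum>i<n. norm (y ^ (n - Suc i) * x ^ i - z ^ (n - Suc i) * z ^ i))"
    unfolding power_diff_quot_def sum_subtractf[symmetric] by (rule norm_sum)
  also have "\<dots> \<le> (\<Sum>i<n. real (n - 1) * R ^ (n - 2) * ?e)"
  proof (rule sum_mono)
    fix i assume i: "i \<in> {..<n}"
    define j where "j = n - Suc i"
    have ij: "i + j = n - 1"
      using i by (auto simp: j_def)
    have "y ^ j * x ^ i - z ^ j * z ^ i = (y ^ j - z ^ j) * x ^ i + z ^ j * (x ^ i - z ^ i)"
      by (simp add: algebra_simps)
    then have "norm (y ^ j * x ^ i - z ^ j * z ^ i)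
        \<le> norm (y ^ j - z ^ j) * norm (x ^ i) + norm (z ^ j) * norm (x ^ i - z ^ i)"
      by (metis norm_mult norm_triangle_ineq)
    also have "\<dots> \<le> (real j * R ^ (j - 1) * norm (y - z)) * R ^ i
        + R ^ j * (real i * R ^ (i - 1) * norm (x - z))"
      using x y z R
      by (intro add_mono mult_mono norm_power_diff_le) (auto simp: norm_power intro: power_mono)
    also have "\<dots> = (real j * R ^ (j - 1) * R ^ i) * norm (y - z)
        + (real i * R ^ (i - 1) * R ^ j) * norm (x - z)"
      by (simp add: algebra_simps)
    also have "\<dots> \<le> real (n - 1) * R ^ (n - 2) * ?e"
      using exponents[of i j] exponents[of j i] ij
      by (simp add: distrib_left add_mono mult_right_mono add.commute)
    finally show "norm (y ^ (n - Suc i) * x ^ i - z ^ (n - Suc i) * z ^ i) \<le> real (n - 1) * R ^ (n - 2) * ?e"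
      by (simp add: j_def)
  qed
  also have "\<dots> = real n * real (n - 1) * R ^ (n - 2) * ?e"
    by (simp only: sum_constant card_lessThan of_nat_id mult.assoc)
  finally show ?thesis .
qed

definition digit_series :: "(nat \<Rightarrow> real) \<Rightarrow> 'a::{real_normed_field,banach} \<Rightarrow> 'a" where
  "digit_series d x = (\<Sum>n. of_real (d n) * x ^ n)"

definition digit_series_quot :: "(nat \<Rightarrow> real) \<Rightarrow> 'a::{real_normed_field,banach} \<Rightarrow> 'a \<Rightarrow> 'a" where
  "digit_series_quot d x y = (\<Sum>n. of_real (d n) * power_diff_quot n x y)"

context
  fixes d :: "nat \<Rightarrow> real" and R :: real
  assumes digits: "\<And>n. \<bar>d n\<bar> \<le> 1" and R: "0 \<le> R" "R < 1"
begin

lemma abs_R_less_1: "\<bar>R\<bar> < 1"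
  using R by simp

lemma summable_digit_series:
  fixes x :: "'a::{real_normed_field,banach}"
  assumes "norm x \<le> R"
  shows "summable (\<lambda>n. of_real (d n) * x ^ n)"
proof (rule summable_comparison_test'[of "\<lambda>n. R ^ n"])
  show "summable (\<lambda>n. R ^ n)"
    using R by (intro summable_geometric) auto
  show "norm (of_real (d n) * x ^ n) \<le> R ^ n" for n
    unfolding norm_mult norm_power norm_of_real
    using digits[of n] assms by (intro order_trans[OF mult_left_le_one_le] power_mono) auto
qed

lemma norm_digit_series_quot_term_le:
  fixes x y :: "'a::{real_normed_field,banach}"
  assumes "norm x \<le> R" "norm y \<le> R"
  shows "norm (of_real (d n) * power_diff_quot n x y) \<le> real n * R ^ (n - 1)"
  unfolding norm_mult norm_of_real
  using digits[of n] norm_power_diff_quot_le[OF assms, of n]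
  by (intro order_trans[OF mult_left_le_one_le]) auto

lemma summable_digit_series_quot:
  fixes x y :: "'a::{real_normed_field,banach}"
  assumes "norm x \<le> R" "norm y \<le> R"
  shows "summable (\<lambda>n. of_real (d n) * power_diff_quot n x y)"
  by (rule summable_comparison_test'[OF summable_of_nat_mult_power_pred[OF abs_R_less_1]
        norm_digit_series_quot_term_le[OF assms]])

lemma norm_digit_series_quot_le:
  fixes x y :: "'a::{real_normed_field,banach}"
  assumes "norm x \<le> R" "norm y \<le> R"
  shows "norm (digit_series_quot d x y) \<le> (\<Sum>n. real n * R ^ (n - 1))"
  unfolding digit_series_quot_def
  by (rule norm_suminf_le[OF norm_digit_series_quot_term_le[OF assms]
        summable_of_nat_mult_power_pred[OF abs_R_less_1]])

lemma digit_series_diff: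
  fixes x y :: "'a::{real_normed_field,banach}"
  assumes x: "norm x \<le> R" and y: "norm y \<le> R"
  shows "digit_series d x - digit_series d y = (x - y) * digit_series_quot d x y"
proof -
  have "digit_series d x - digit_series d y = (\<Sum>n. of_real (d n) * x ^ n - of_real (d n) * y ^ n)"
    unfolding digit_series_def by (rule suminf_diff[OF summable_digit_series[OF x] summable_digit_series[OF y]])
  also have "\<dots> = (\<Sum>n. (x - y) * (of_real (d n) * power_diff_quot n x y))"
  proof (rule suminf_cong)
    fix n
    have "of_real (d n) * x ^ n - of_real (d n) * y ^ n = of_real (d n) * (x ^ n - y ^ n)"
      by (simp add: right_diff_distrib)
    then show "of_real (d n) * x ^ n - of_real (d n) * y ^ n = (x - y) * (of_real (d n) * power_diff_quot n x y)"
      by (simp add: power_diff_eq_mult_quot mult.left_commute)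
  qed
  also have "\<dots> = (x - y) * digit_series_quot d x y"
    unfolding digit_series_quot_def by (rule suminf_mult[OF summable_digit_series_quot[OF x y]])
  finally show ?thesis .
qed

lemma norm_digit_series_quot_diff_le:
  fixes x y z :: "'a::{real_normed_field,banach}"
  assumes x: "norm x \<le> R" and y: "norm y \<le> R" and z: "norm z \<le> R"
  shows "norm (digit_series_quot d x y - digit_series_quot d z z)
    \<le> (\<Sum>n. real n * real (n - 1) * R ^ (n - 2)) * (norm (x - z) + norm (y - z))"
proof -
  let ?e = "norm (x - z) + norm (y - z)"
  have "digit_series_quot d x y - digit_series_quot d z z
      = (\<Sum>n. of_real (d n) * (power_diff_quot n x y - power_diff_quot n z z))"
    unfolding digit_series_quot_def right_diff_distrib
    by (rule suminf_diff[OF summable_digit_series_quot[OF x y] summable_digit_series_quot[OF z z]])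
  also have "norm \<dots> \<le> (\<Sum>n. real n * real (n - 1) * R ^ (n - 2) * ?e)"
  proof (rule norm_suminf_le)
    show "summable (\<lambda>n. real n * real (n - 1) * R ^ (n - 2) * ?e)"
      by (intro summable_mult2 summable_of_nat_mult_pred_power[OF abs_R_less_1])
    show "norm (of_real (d n) * (power_diff_quot n x y - power_diff_quot n z z))
        \<le> real n * real (n - 1) * R ^ (n - 2) * ?e" for n
      unfolding norm_mult norm_of_real
      using digits[of n] norm_power_diff_quot_diff_le[OF x y z, of n]
      by (intro order_trans[OF mult_left_le_one_le]) auto
  qed
  also have "\<dots> = (\<Sum>n. real n * real (n - 1) * R ^ (n - 2)) * ?e"
    by (rule suminf_mult2[symmetric, OF summable_of_nat_mult_pred_power[OF abs_R_less_1]])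
  finally show ?thesis .
qed

lemma digit_series_cnj:
  assumes "cmod x \<le> R"
  shows "digit_series d (cnj x) = cnj (digit_series d x)"
proof -
  have "(\<lambda>n. cnj (of_real (d n) * x ^ n)) sums cnj (digit_series d x)"
    unfolding sums_cnj digit_series_def by (rule summable_sums[OF summable_digit_series[OF assms]])
  then show ?thesis
    unfolding digit_series_def by (simp add: sums_iff)
qed

lemma digit_series_near_nonreal_root:
  fixes w x :: complex
  assumes root: "digit_series d w = 0" and nonreal: "w \<notin> \<real>" and w: "cmod w \<le> R"
    and x: "x \<in> \<real>" "cmod x \<le> R"
  shows "cmod (digit_series d x) \<le> cmod (w - x) * (\<Sum>n. real n * R ^ (n - 1))"
    and "cmod (digit_series_quot d x x)
      \<le> 2 * cmod (w - x) * (\<Sum>n. real n * real (n - 1) * R ^ (n - 2))"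
proof -
  have "digit_series d x = (x - w) * digit_series_quot d x w"
    using digit_series_diff[OF x(2) w] root by simp
  then show "cmod (digit_series d x) \<le> cmod (w - x) * (\<Sum>n. real n * R ^ (n - 1))"
    using norm_digit_series_quot_le[OF x(2) w]
    by (simp add: norm_mult norm_minus_commute mult_left_mono)
  have cnj_w: "cmod (cnj w) \<le> R"
    using w by simp
  have "(w - cnj w) * digit_series_quot d w (cnj w) = 0"
    using digit_series_diff[OF w cnj_w] digit_series_cnj[OF w] root by simp
  moreover have "w - cnj w \<noteq> 0"
    using nonreal by (simp add: complex_is_Real_iff complex_eq_iff)
  ultimately have quot_root: "digit_series_quot d w (cnj w) = 0"
    by simp
  have "cmod (cnj w - x) = cmod (w - x)"
    using x(1) by (metis Reals_cnj_iff complex_cnj_diff complex_mod_cnj)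
  then show "cmod (digit_series_quot d x x)
      \<le> 2 * cmod (w - x) * (\<Sum>n. real n * real (n - 1) * R ^ (n - 2))"
    using norm_digit_series_quot_diff_le[OF w cnj_w x(2)] quot_root by (simp add: algebra_simps)
qed

lemma of_real_digit_series:
  assumes "\<bar>t\<bar> \<le> R"
  shows "of_real (digit_series d t) = (digit_series d (of_real t) :: 'a::{real_normed_field,banach})"
  unfolding digit_series_def
  using suminf_of_real[OF summable_digit_series[of t]] assms by simp

lemma of_real_digit_series_quot_same:
  assumes "\<bar>t\<bar> \<le> R"
  shows "of_real (digit_series_quot d t t)
    = (digit_series_quot d (of_real t) (of_real t) :: 'a::{real_normed_field,banach})"
  unfolding digit_series_quot_def
  using suminf_of_real[OF summable_digit_series_quot[of t t]] assms by (simp add: power_diff_quot_same)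

end

definition digit_diff :: "(nat \<Rightarrow> bool) \<Rightarrow> (nat \<Rightarrow> bool) \<Rightarrow> nat \<Rightarrow> real" where
  "digit_diff a b n = of_bool (a n) - of_bool (b n)"

lemma abs_digit_diff_le: "\<bar>digit_diff a b n\<bar> \<le> 1"
  by (simp add: digit_diff_def)

lemma Lambda_coding_diff:
  assumes "cmod w < 1"
  shows "Lambda_coding w a - Lambda_coding w b = (1 - w) * digit_series (digit_diff a b) w"
proof -
  have "Lambda_coding w a - Lambda_coding w b
      = (\<Sum>n. (1 - w) * w ^ n * of_bool (a n) - (1 - w) * w ^ n * of_bool (b n))"
    unfolding Lambda_coding_def
    by (rule suminf_diff[OF summable_Lambda_coding[OF assms] summable_Lambda_coding[OF assms]])
  also have "\<dots> = (\<Sum>n. (1 - w) * (of_real (digit_diff a b n) * w ^ n))"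
    by (intro suminf_cong) (simp add: digit_diff_def of_bool_def algebra_simps)
  also have "\<dots> = (1 - w) * digit_series (digit_diff a b) w"
    unfolding digit_series_def
    by (rule suminf_mult[OF summable_digit_series[OF abs_digit_diff_le norm_ge_zero assms order_refl]])
  finally show ?thesis .
qed

context
  fixes z :: real
  assumes z: "\<bar>z\<bar> < 1"
begin

lemma summable_real_digit_series: "summable (\<lambda>n. digit_diff a b n * z ^ n)"
  using summable_digit_series[OF abs_digit_diff_le abs_ge_zero z, of z] by simp

lemma summable_real_digit_series_quot:
  "summable (\<lambda>n. digit_diff a b n * (real n * z ^ (n - 1)))"
  using summable_digit_series_quot[OF abs_digit_diff_le abs_ge_zero z, of z z]
  by (simp add: power_diff_quot_same)

lemma L_coding_diff:
  fixes a b :: "nat \<Rightarrow> bool"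
  defines "S \<equiv> digit_series (digit_diff a b) z" and "Q \<equiv> digit_series_quot (digit_diff a b) z z"
  shows "L_coding z a - L_coding z b = ((1 - z) * S, (1 - z) * Q - S)"
proof -
  have "fst (L_coding z a) - fst (L_coding z b) = (\<Sum>n. (1 - z) * (digit_diff a b n * z ^ n))"
    unfolding L_coding_def fst_conv
    by (subst suminf_diff[OF summable_L_coding_fst[OF z] summable_L_coding_fst[OF z]])
      (simp add: digit_diff_def algebra_simps)
  also have "\<dots> = (1 - z) * S"
    unfolding S_def digit_series_def by (simp add: suminf_mult summable_real_digit_series)
  finally have fst_diff: "fst (L_coding z a) - fst (L_coding z b) = (1 - z) * S" .
  have "snd (L_coding z a) - snd (L_coding z b)
      = (\<Sum>n. (1 - z) * (digit_diff a b n * (real n * z ^ (n - 1))) - digit_diff a b n * z ^ n)"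
    unfolding L_coding_def snd_conv
    by (subst suminf_diff[OF summable_L_coding_snd[OF z] summable_L_coding_snd[OF z]])
      (simp add: digit_diff_def algebra_simps)
  also have "\<dots> = (\<Sum>n. (1 - z) * (digit_diff a b n * (real n * z ^ (n - 1))))
      - (\<Sum>n. digit_diff a b n * z ^ n)"
    by (rule suminf_diff[OF summable_mult[OF summable_real_digit_series_quot] summable_real_digit_series,
          symmetric])
  also have "\<dots> = (1 - z) * Q - S"
    unfolding S_def Q_def digit_series_def digit_series_quot_def power_diff_quot_same
    using suminf_mult[OF summable_real_digit_series_quot, of "1 - z"] by simp
  finally show ?thesis
    using fst_diff by (simp add: prod_eq_iff)
qed

lemma dist_L_coding_le:
  fixes a b :: "nat \<Rightarrow> bool"
  defines "d \<equiv> digit_diff a b"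
  shows "dist (L_coding z a) (L_coding z b)
    \<le> 3 * cmod (digit_series d (of_real z)) + 2 * cmod (digit_series_quot d (of_real z) (of_real z))"
proof -
  define S where "S = digit_series d z"
  define Q where "Q = digit_series_quot d z z"
  have "\<bar>1 - z\<bar> \<le> 2"
    using z by simp
  then have "\<bar>(1 - z) * S\<bar> \<le> 2 * \<bar>S\<bar>" "\<bar>(1 - z) * Q\<bar> \<le> 2 * \<bar>Q\<bar>"
    unfolding abs_mult by (simp_all add: mult_right_mono)
  then have "\<bar>(1 - z) * S\<bar> + \<bar>(1 - z) * Q - S\<bar> \<le> 3 * \<bar>S\<bar> + 2 * \<bar>Q\<bar>"
    using abs_triangle_ineq4[of "(1 - z) * Q" S] by linarith
  moreover have "dist (L_coding z a) (L_coding z b) = norm ((1 - z) * S, (1 - z) * Q - S)"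
    unfolding dist_norm S_def Q_def d_def L_coding_diff ..
  ultimately have "dist (L_coding z a) (L_coding z b) \<le> 3 * \<bar>S\<bar> + 2 * \<bar>Q\<bar>"
    using norm_Pair_le[of "(1 - z) * S" "(1 - z) * Q - S", unfolded real_norm_def] by linarith
  also have "\<bar>S\<bar> = cmod (digit_series d (of_real z))"
    unfolding S_def d_def of_real_digit_series[OF abs_digit_diff_le abs_ge_zero z order_refl, symmetric]
    by (rule norm_of_real[symmetric])
  also have "\<bar>Q\<bar> = cmod (digit_series_quot d (of_real z) (of_real z))"
    unfolding Q_def d_def of_real_digit_series_quot_same[OF abs_digit_diff_le abs_ge_zero z order_refl, symmetric]
    by (rule norm_of_real[symmetric])
  finally show ?thesis .
qed

end

lemma Mset_coding_collision:
  assumes "w \<in> Mset"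
  obtains a b where "Lambda_coding w (case_nat False a) = Lambda_coding w (case_nat True b)"
proof -
  have w: "cmod w < 1" "connected (Lambda w)"
    using assms by (auto simp: Mset_def)
  interpret affine_ifs_coding "\<lambda>b. if b then (\<lambda>x. w * (x - 1) + 1) else (\<lambda>x. w * x)" "(*) w"
    "\<lambda>b. if b then 1 - w else 0" "\<lambda>n. cmod w ^ n" "Lambda_coding w" "cmod (1 - w) / (1 - cmod w)"
    by (rule affine_ifs_coding_Lambda[OF w(1)])
  let ?S = "range (Lambda_coding w)"
  have S: "compact ?S" and S_eq: "?S = (*) w ` ?S \<union> (\<lambda>x. w * (x - 1) + 1) ` ?S"
    using range_coding_is_attractor by auto
  have "closed ((*) w ` ?S)" "closed ((\<lambda>x. w * (x - 1) + 1) ` ?S)"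
    by (intro compact_imp_closed compact_continuous_image[OF _ S] continuous_intros)+
  then have "(*) w ` ?S \<inter> (\<lambda>x. w * (x - 1) + 1) ` ?S \<noteq> {}"
    using w(2) S_eq unfolding Lambda_eq_range_coding[OF w(1)]
    by (intro connected_as_closed_union) auto
  then obtain a b where "w * Lambda_coding w a = w * (Lambda_coding w b - 1) + 1"
    by auto
  then show ?thesis
    using map_coding[of False a] map_coding[of True b] that by simp
qed

lemma L_images_separated:
  assumes z: "\<bar>z\<bar> < 1" and disjoint: "f1 z ` L z \<inter> g1 z ` L z = {}"
  obtains \<delta> where "\<delta> > 0"
    and "\<And>a b. \<delta> \<le> dist (L_coding z (case_nat False a)) (L_coding z (case_nat True b))"
proof -
  interpret affine_ifs_coding "\<lambda>b. if b then g1 z else f1 z" "f1 z" "\<lambda>b. if b then (1 - z, -1) else 0"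
    "\<lambda>n. 2 * \<bar>z\<bar> ^ n + real n * \<bar>z\<bar> ^ (n - 1)" "L_coding z"
    "(\<Sum>n. \<bar>1 - z\<bar> * \<bar>z\<bar> ^ n) + (\<Sum>n. \<bar>1 - z\<bar> * (real n * \<bar>z\<bar> ^ (n - 1)) + \<bar>z\<bar> ^ n)"
    by (rule affine_ifs_coding_L[OF z])
  have "compact (range (L_coding z))"
    using range_coding_is_attractor by blast
  then have "compact (f1 z ` range (L_coding z))" "compact (g1 z ` range (L_coding z))"
    using continuous_on_map[of _ False] continuous_on_map[of _ True]
    by (auto intro: compact_continuous_image)
  then obtain \<delta> where "\<delta> > 0"
    and \<delta>: "\<And>x y. x \<in> f1 z ` range (L_coding z) \<Longrightarrow> y \<in> g1 z ` range (L_coding z) \<Longrightarrow> \<delta> \<le> dist x y"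
    using separate_compact_closed[OF _ compact_imp_closed] disjoint
    unfolding L_eq_range_coding[OF z] by metis
  moreover have "\<delta> \<le> dist (L_coding z (case_nat False a)) (L_coding z (case_nat True b))" for a b
  proof (rule \<delta>)
    show "L_coding z (case_nat False a) \<in> f1 z ` range (L_coding z)"
      unfolding map_coding[of False a, symmetric] by auto
    show "L_coding z (case_nat True b) \<in> g1 z ` range (L_coding z)"
      unfolding map_coding[of True b, symmetric] by auto
  qed
  ultimately show ?thesis
    using that by blast
qed

lemma nonreal_Mset_dist_L_coding_le:
  assumes w: "w \<in> Mset" "w \<notin> \<real>" "cmod w \<le> R" and z: "\<bar>z\<bar> \<le> R" and R: "R < 1"
  obtains a b where "dist (L_coding z (case_nat False a)) (L_coding z (case_nat True b))
    \<le> cmod (w - of_real z) * (3 * (\<Sum>n. real n * R ^ (n - 1))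
      + 4 * (\<Sum>n. real n * real (n - 1) * R ^ (n - 2)))"
proof -
  obtain a b where collision: "Lambda_coding w (case_nat False a) = Lambda_coding w (case_nat True b)"
    using Mset_coding_collision[OF w(1)] .
  define d where "d = digit_diff (case_nat False a) (case_nat True b)"
  have R0: "0 \<le> R"
    using z by linarith
  have "(1 - w) * digit_series d w = 0"
    using Lambda_coding_diff[of w "case_nat False a" "case_nat True b"] collision w(3) R
    by (simp add: d_def)
  moreover have "w \<noteq> 1"
    using w(3) R by auto
  ultimately have "digit_series d w = 0"
    by simp
  moreover have "\<bar>d n\<bar> \<le> 1" for n
    by (simp add: d_def abs_digit_diff_le)
  moreover have "of_real z \<in> \<real>" "cmod (of_real z) \<le> R"
    using z by auto
  ultimately have near_root:
    "cmod (digit_series d (of_real z)) \<le> cmod (w - of_real z) * (\<Sum>n. real n * R ^ (n - 1))"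
    "cmod (digit_series_quot d (of_real z) (of_real z))
      \<le> 2 * cmod (w - of_real z) * (\<Sum>n. real n * real (n - 1) * R ^ (n - 2))"
    using digit_series_near_nonreal_root[OF _ R0 R _ w(2,3)] by blast+
  have "dist (L_coding z (case_nat False a)) (L_coding z (case_nat True b))
      \<le> 3 * cmod (digit_series d (of_real z)) + 2 * cmod (digit_series_quot d (of_real z) (of_real z))"
    unfolding d_def using z R by (intro dist_L_coding_le) auto
  also have "\<dots> \<le> cmod (w - of_real z) * (3 * (\<Sum>n. real n * R ^ (n - 1))
      + 4 * (\<Sum>n. real n * real (n - 1) * R ^ (n - 2)))"
    using near_root z by (simp add: algebra_simps)
  finally show ?thesis
    using that by blast
qed

lemma Mset_real_near_separated_point:
  assumes z: "\<bar>z\<bar> < 1" and "\<delta> > 0"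
    and separated: "\<And>a b. \<delta> \<le> dist (L_coding z (case_nat False a)) (L_coding z (case_nat True b))"
  obtains \<epsilon> where "\<epsilon> > 0" and "\<And>w. w \<in> Mset \<Longrightarrow> dist (of_real z) w < \<epsilon> \<Longrightarrow> w \<in> \<real>"
proof -
  define R where "R = (1 + \<bar>z\<bar>) / 2"
  define K where "K = 3 * (\<Sum>n. real n * R ^ (n - 1)) + 4 * (\<Sum>n. real n * real (n - 1) * R ^ (n - 2))"
  define \<epsilon> where "\<epsilon> = min (R - \<bar>z\<bar>) (\<delta> / (K + 1))"
  have R: "\<bar>z\<bar> < R" "R < 1"
    using z by (auto simp: R_def)
  have K: "0 \<le> K"
    unfolding K_def using R
    by (intro add_nonneg_nonneg mult_nonneg_nonneg suminf_nonneg summable_of_nat_mult_power_pred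
        summable_of_nat_mult_pred_power) auto
  have "w \<in> \<real>" if w: "w \<in> Mset" "dist (of_real z) w < \<epsilon>" for w
  proof (rule ccontr)
    assume "w \<notin> \<real>"
    have "cmod w \<le> R"
      using w(2) norm_triangle_ineq2[of w "of_real z"] by (simp add: \<epsilon>_def dist_norm norm_minus_commute)
    then obtain a b where "dist (L_coding z (case_nat False a)) (L_coding z (case_nat True b))
        \<le> cmod (w - of_real z) * K"
      using nonreal_Mset_dist_L_coding_le[OF w(1) \<open>w \<notin> \<real>\<close> _ _ R(2), of z] R(1)
      unfolding K_def by (metis less_imp_le)
    also have "\<dots> \<le> cmod (w - of_real z) * (K + 1)"
      by (simp add: mult_left_mono)
    also have "\<dots> < \<delta>"
      using w(2) K by (simp add: \<epsilon>_def dist_norm norm_minus_commute pos_less_divide_eq)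
    finally show False
      using separated[of a b] by simp
  qed
  moreover have "\<epsilon> > 0"
    using R \<open>\<delta> > 0\<close> K by (simp add: \<epsilon>_def)
  ultimately show ?thesis
    using that by blast
qed

theorem lemma10p2p1:
  fixes z :: real
  assumes "-1 < z" and "z < 1"
    and "f1 z ` L z \<inter> g1 z ` L z = {}"
  shows "\<exists>U. open U \<and> complex_of_real z \<in> U \<and> Mset \<inter> U \<subseteq> \<real>"
proof -
  have z: "\<bar>z\<bar> < 1"
    using assms(1,2) by auto
  obtain \<delta> where "\<delta> > 0"
    and "\<And>a b. \<delta> \<le> dist (L_coding z (case_nat False a)) (L_coding z (case_nat True b))"
    using L_images_separated[OF z assms(3)] by blast
  then obtain \<epsilon> where "\<epsilon> > 0" and "\<And>w. w \<in> Mset \<Longrightarrow> dist (of_real z) w < \<epsilon> \<Longrightarrow> w \<in> \<real>"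
    using Mset_real_near_separated_point[OF z] by blast
  then show ?thesis
    by (intro exI[of _ "ball (of_real z) \<epsilon>"]) auto
qed

end
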